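(* Let $A\in\mathbb{R}^{n\times d}$ have rows $a_1^\top,\dots,a_n^\top$, let $f_1,\dots,f_n:\mathbb{R}\to\mathbb{R}$ be convex and $(1/\gamma)$-smooth ($\gamma>0$), let $g:\mathbb{R}^d\to\mathbb{R}\cup\{+\infty\}$ be closed and $\mu$-strongly convex ($\mu>0$), and let $\bar R=\max_i\|a_i\|_2$. Consider the iterates of the SDAPD method (described in the context) and the potential $\tilde\phi_t$ with $\tilde\phi_t^*=\min_x\tilde\phi_t(x)$. Fix $t\ge0$ and assume $\eta(1+B_{t-1}\mu)\ge\beta_t$. Then $$\mathbb{E}_{\mathcal{F}_t}\big[\tilde\phi_{t+1}^*-\tilde\phi_t^*\big]\ge\beta_t\,\mathbb{E}_{\mathcal{F}_t}\Big[g(\bar{x}^{t+1})+\frac1n\langle\bar{y}^{t+1},A\bar{x}^{t+1}\rangle\Big]-\frac{\bar R^2\beta_t\eta}{2}\mathbb{E}_{\mathcal{F}_t}\big[\|y^{t+1}-y^t\|_2^2\big].$$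
   Context: $f_i^*$ is the convex conjugate of $f_i$; $\operatorname{prox}_h(u)=\arg\min_v\{h(v)+\frac12\|v-u\|_2^2\}$. SDAPD method: given $x^0\in\mathbb{R}^d$, $y^0\in\mathbb{R}^n$, $\eta,\tau>0$, $\beta_t>0$, set $B_t=\sum_{k=0}^t\beta_k$ (with $B_{-1}=0$). For $t=0,1,\dots$: sample $i_t$ uniformly from $\{1,\dots,n\}$ independently of the past; $\bar{x}^{t+1}=\operatorname{prox}_{\eta g}(x^t-\frac{\eta}{n}A^\top y^t)$; $y^{t+1}_i=\operatorname{prox}_{\tau f_i^*}(y_i^t+\tau\langle a_i,\bar{x}^{t+1}\rangle)$ if $i=i_t$, $y^{t+1}_i=y^t_i$ otherwise; $\bar{y}^{t+1}=y^t+n(y^{t+1}-y^t)$; $x^{t+1}=\operatorname{prox}_{B_tg}(x^0-\sum_{k=0}^t\frac{\beta_k}{n}A^\top\bar{y}^{k+1})$. Potential: $\tilde\phi_t(x)=\frac12\|x-x^0\|_2^2+\sum_{k=0}^{t-1}\beta_k\big(g(x)+\frac1n\langle\bar{y}^{k+1},Ax\rangle\big)$. $\mathcal{F}_t$ is the $\sigma$-field generated by all random variables up to iteration $t$ (so $x^t,y^t$ are $\mathcal{F}_t$-measurable and $i_t$ is independent of $\mathcal{F}_t$), and $\mathbb{E}_{\mathcal{F}_t}$ denotes conditional expectation given $\mathcal{F}_t$. *)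

theory Defs
  imports "HOL-Analysis.Analysis"
begin

text \<open>Proximal operator of an extended-real-valued function h:
  prox h u = argmin_v { h v + 1/2 ||v - u||^2 } (the minimiser is unique whenever
  it exists, e.g. for h closed proper strongly convex; we take it via SOME).\<close>
definition prox :: "('a::real_normed_vector \<Rightarrow> ereal) \<Rightarrow> 'a \<Rightarrow> 'a" where
  "prox h u = (SOME v. \<forall>w. h v + ereal (norm (v - u) ^ 2 / 2) \<le> h w + ereal (norm (w - u) ^ 2 / 2))"

definition conj_fun :: "(real \<Rightarrow> real) \<Rightarrow> real \<Rightarrow> ereal" where
  "conj_fun f y = (SUP x. ereal (y * x - f x))"

definition closed_fun :: "('a::topological_space \<Rightarrow> ereal) \<Rightarrow> bool" where
  "closed_fun g \<longleftrightarrow> closed {(x, r::real). g x \<le> ereal r}"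

definition strongly_convex_ext :: "real \<Rightarrow> ('a::real_normed_vector \<Rightarrow> ereal) \<Rightarrow> bool" where
  "strongly_convex_ext \<mu> g \<longleftrightarrow>
     (\<forall>x y. \<forall>l::real. 0 \<le> l \<and> l \<le> 1 \<longrightarrow>
        g (l *\<^sub>R x + (1 - l) *\<^sub>R y) + ereal (\<mu> / 2 * l * (1 - l) * norm (x - y) ^ 2)
          \<le> ereal l * g x + ereal (1 - l) * g y)"

definition smooth_fun :: "real \<Rightarrow> (real \<Rightarrow> real) \<Rightarrow> bool" where
  "smooth_fun L f \<longleftrightarrow> (\<forall>x. f differentiable (at x)) \<and>
      (\<forall>x y. \<bar>deriv f x - deriv f y\<bar> \<le> L * \<bar>x - y\<bar>)"

text \<open>B_t = sum_{k=0}^t beta_k; we use Bsum beta t = sum_{k<t} beta_k, so that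
  B_t = Bsum beta (t+1) and B_{-1} = Bsum beta 0 = 0.\<close>
definition Bsum :: "(nat \<Rightarrow> real) \<Rightarrow> nat \<Rightarrow> real" where
  "Bsum \<beta> t = (\<Sum>k<t. \<beta> k)"

text \<open>SDAPD iterates along a sample path ii : nat => 'n (ii t = i_t).
  State at time t: (x^t, y^t, s^t) with s^t = sum_{k<t} beta_k ybar^{k+1}.
  Indices 1..n are represented by the finite type 'n, n = CARD('n);
  A :: real^'d^'n has rows a_i = A $ i.\<close>
primrec sdapd :: "(real^('d::finite)^('n::finite)) \<Rightarrow> (real^'d \<Rightarrow> ereal) \<Rightarrow> ('n \<Rightarrow> real \<Rightarrow> real)
    \<Rightarrow> real \<Rightarrow> real \<Rightarrow> (nat \<Rightarrow> real) \<Rightarrow> (real^'d) \<Rightarrow> (real^'n) \<Rightarrow> (nat \<Rightarrow> 'n) \<Rightarrow> nat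
    \<Rightarrow> (real^'d) \<times> (real^'n) \<times> (real^'n)" where
  "sdapd A g f \<eta> \<tau> \<beta> x0 y0 ii 0 = (x0, y0, 0)"
| "sdapd A g f \<eta> \<tau> \<beta> x0 y0 ii (Suc t) =
    (case sdapd A g f \<eta> \<tau> \<beta> x0 y0 ii t of (x, y, s) \<Rightarrow>
      let n = real CARD('n);
          xb = prox (\<lambda>v. ereal \<eta> * g v) (x - (\<eta> / n) *\<^sub>R (transpose A *v y));
          y' = (\<chi> j. if j = ii t
                      then prox (\<lambda>v. ereal \<tau> * conj_fun (f j) v) (y $ j + \<tau> * (A $ j \<bullet> xb))
                      else y $ j);
          yb = y + n *\<^sub>R (y' - y);
          s' = s + \<beta> t *\<^sub>R yb;
          x' = prox (\<lambda>v. ereal (Bsum \<beta> (Suc t)) * g v) (x0 - (1 / n) *\<^sub>R (transpose A *v s'))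
      in (x', y', s'))"

definition sd_x where "sd_x A g f \<eta> \<tau> \<beta> x0 y0 ii t = fst (sdapd A g f \<eta> \<tau> \<beta> x0 y0 ii t)"
definition sd_y where "sd_y A g f \<eta> \<tau> \<beta> x0 y0 ii t = fst (snd (sdapd A g f \<eta> \<tau> \<beta> x0 y0 ii t))"

text \<open>sd_xbar ... t = xbar^{t+1} (depends only on x^t, y^t).\<close>
definition sd_xbar :: "(real^('d::finite)^('n::finite)) \<Rightarrow> (real^'d \<Rightarrow> ereal) \<Rightarrow> ('n \<Rightarrow> real \<Rightarrow> real)
    \<Rightarrow> real \<Rightarrow> real \<Rightarrow> (nat \<Rightarrow> real) \<Rightarrow> (real^'d) \<Rightarrow> (real^'n) \<Rightarrow> (nat \<Rightarrow> 'n) \<Rightarrow> nat \<Rightarrow> (real^'d)" where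
  "sd_xbar A g f \<eta> \<tau> \<beta> x0 y0 ii t =
     prox (\<lambda>v. ereal \<eta> * g v)
       (sd_x A g f \<eta> \<tau> \<beta> x0 y0 ii t - (\<eta> / real CARD('n)) *\<^sub>R (transpose A *v sd_y A g f \<eta> \<tau> \<beta> x0 y0 ii t))"

text \<open>sd_ybar ... t = ybar^{t+1} = y^t + n (y^{t+1} - y^t).\<close>
definition sd_ybar :: "(real^('d::finite)^('n::finite)) \<Rightarrow> (real^'d \<Rightarrow> ereal) \<Rightarrow> ('n \<Rightarrow> real \<Rightarrow> real)
    \<Rightarrow> real \<Rightarrow> real \<Rightarrow> (nat \<Rightarrow> real) \<Rightarrow> (real^'d) \<Rightarrow> (real^'n) \<Rightarrow> (nat \<Rightarrow> 'n) \<Rightarrow> nat \<Rightarrow> (real^'n)" where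
  "sd_ybar A g f \<eta> \<tau> \<beta> x0 y0 ii t =
     sd_y A g f \<eta> \<tau> \<beta> x0 y0 ii t
     + real CARD('n) *\<^sub>R (sd_y A g f \<eta> \<tau> \<beta> x0 y0 ii (Suc t) - sd_y A g f \<eta> \<tau> \<beta> x0 y0 ii t)"

definition sd_phi :: "(real^('d::finite)^('n::finite)) \<Rightarrow> (real^'d \<Rightarrow> ereal) \<Rightarrow> ('n \<Rightarrow> real \<Rightarrow> real)
    \<Rightarrow> real \<Rightarrow> real \<Rightarrow> (nat \<Rightarrow> real) \<Rightarrow> (real^'d) \<Rightarrow> (real^'n) \<Rightarrow> (nat \<Rightarrow> 'n) \<Rightarrow> nat \<Rightarrow> (real^'d) \<Rightarrow> ereal" where
  "sd_phi A g f \<eta> \<tau> \<beta> x0 y0 ii t x =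
     ereal (norm (x - x0) ^ 2 / 2)
     + (\<Sum>k<t. ereal (\<beta> k) * (g x + ereal (sd_ybar A g f \<eta> \<tau> \<beta> x0 y0 ii k \<bullet> (A *v x) / real CARD('n))))"

text \<open>phi~_t^* = min_x phi~_t(x) (written as an infimum; it is attained under the hypotheses).\<close>
definition sd_phistar where
  "sd_phistar A g f \<eta> \<tau> \<beta> x0 y0 ii t = (INF x. sd_phi A g f \<eta> \<tau> \<beta> x0 y0 ii t x)"

end

theory Submission
  imports Defs
begin

(* The potential phi_t equals, up to an additive constant, the proximal objective
   B_{t-1} g + 1/2 ||. - w_t||^2 with w_t = x0 - (1/n) sum_{k<t} beta_k A^T ybar^{k+1},
   whose minimiser is x^t.  This objective is (1 + B_{t-1} mu)-strongly convex, so
   phi_t(x) >= phi_t^* + (1 + B_{t-1} mu)/2 ||x - x^t||^2.  As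
   phi_{t+1} = phi_t + beta_t (g + <ybar^{t+1}, A .>/n), it suffices to bound the added term
   from below at every x.  The three-point inequality of the proximal step defining
   xbar^{t+1}, scaled by beta_t/eta and combined with the step-size condition, does so up to
   the cross term beta_t <y^{t+1} - y^t, A (x - xbar^{t+1})>.  Since y^{t+1} - y^t has a
   single nonzero coordinate, Cauchy-Schwarz and Young bound this term below by
   -beta_t (||x - xbar^{t+1}||^2/(2 eta) + eta Rbar^2 ||y^{t+1} - y^t||^2/2).
   The bound holds for every sample i_t, hence on average.  It holds whatever the dual
   proximal step returns. *)

lemma closed_fun_sublevel_graph:
  fixes g :: "'a::topological_space \<Rightarrow> ereal"
  assumes "closed_fun g" and "continuous_on UNIV h"
  shows "closed {v. g v \<le> ereal (h v)}"
proof -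
  have "{v. g v \<le> ereal (h v)} = (\<lambda>v. (v, h v)) -` {(x, r). g x \<le> ereal r}"
    by auto
  moreover have "closed ((\<lambda>v. (v, h v)) -` {(x, r). g x \<le> ereal r})"
    using assms unfolding closed_fun_def by (intro closed_vimage continuous_intros)
  ultimately show ?thesis
    by simp
qed

lemma closed_fun_prox_objective_sublevel:
  fixes g :: "'a::real_normed_vector \<Rightarrow> ereal"
  assumes "closed_fun g" and "c > 0"
  shows "closed {v. ereal c * g v + ereal (norm (v - u)^2 / 2) \<le> ereal r}"
proof -
  have "ereal c * g v + ereal (norm (v - u)^2 / 2) \<le> ereal r
        \<longleftrightarrow> g v \<le> ereal ((r - norm (v - u)^2 / 2) / c)" for v
    using \<open>c > 0\<close> by (cases "g v") (simp_all add: pos_le_divide_eq algebra_simps)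
  moreover have "closed {v. g v \<le> ereal ((r - norm (v - u)^2 / 2) / c)}"
    using \<open>c > 0\<close> by (intro closed_fun_sublevel_graph[OF assms(1)] continuous_intros) auto
  ultimately show ?thesis
    by simp
qed

lemma closed_sublevels_attains_inf:
  fixes F :: "'a::topological_space \<Rightarrow> ereal"
  assumes closed: "\<And>r. closed {x. F x \<le> ereal r}" and "compact K" and "K \<noteq> {}"
  shows "\<exists>z\<in>K. \<forall>x\<in>K. F z \<le> F x"
proof -
  define m where "m = (INF x\<in>K. F x)"
  have "K \<inter> (\<Inter>r\<in>{r. m < ereal r}. {x. F x \<le> ereal r}) \<noteq> {}"
  proof (rule compact_imp_fip_image[OF \<open>compact K\<close> closed])
    fix I assume "finite I" and I: "I \<subseteq> {r. m < ereal r}"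
    show "K \<inter> (\<Inter>r\<in>I. {x. F x \<le> ereal r}) \<noteq> {}"
    proof (cases "I = {}")
      case False
      then have "Min I \<in> I"
        using \<open>finite I\<close> by simp
      then have "m < ereal (Min I)"
        using I by auto
      then obtain x where "x \<in> K" and "F x < ereal (Min I)"
        unfolding m_def by (auto simp: INF_less_iff)
      moreover have "F x \<le> ereal r" if "r \<in> I" for r
      proof -
        have "ereal (Min I) \<le> ereal r"
          using \<open>finite I\<close> that by simp
        with less_imp_le[OF \<open>F x < ereal (Min I)\<close>] show ?thesis
          by (rule order.trans)
      qed
      ultimately show ?thesis
        by blast
    qed (use \<open>K \<noteq> {}\<close> in simp)
  qed
  then obtain z where "z \<in> K" and z: "\<And>r. m < ereal r \<Longrightarrow> F z \<le> ereal r"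
    by auto
  have "F z \<le> m"
  proof (rule dense_ge)
    show "F z \<le> y" if "m < y" for y
      using that z by (cases y) auto
  qed
  then show ?thesis
    using \<open>z \<in> K\<close> unfolding m_def by (meson INF_lower order_trans)
qed

lemma strongly_convex_ext_imp_convex:
  assumes "strongly_convex_ext \<mu> g" and "0 \<le> \<mu>"
  shows "strongly_convex_ext 0 g"
  unfolding strongly_convex_ext_def
proof (intro allI impI)
  fix x y and l :: real
  assume l: "0 \<le> l \<and> l \<le> 1"
  have "g (l *\<^sub>R x + (1 - l) *\<^sub>R y) \<le> g (l *\<^sub>R x + (1 - l) *\<^sub>R y) + ereal (\<mu> / 2 * l * (1 - l) * norm (x - y)^2)"
    using l \<open>0 \<le> \<mu>\<close> by (intro ereal_le_add_self) simp
  also have "\<dots> \<le> ereal l * g x + ereal (1 - l) * g y"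
    using assms(1) l unfolding strongly_convex_ext_def by blast
  finally show "g (l *\<^sub>R x + (1 - l) *\<^sub>R y) + ereal (0 / 2 * l * (1 - l) * norm (x - y)^2)
      \<le> ereal l * g x + ereal (1 - l) * g y"
    by simp
qed

lemma convex_closed_fun_cone_minorant:
  fixes g :: "'a::euclidean_space \<Rightarrow> ereal"
  assumes closed: "closed_fun g" and finite_below: "\<And>x. g x \<noteq> -\<infinity>"
    and "g x1 = ereal a" and convex: "strongly_convex_ext 0 g"
  shows "\<exists>L K. 0 \<le> K \<and> (\<forall>x. ereal (L - K * norm (x - x1)) \<le> g x)"
proof -
  have "closed {x. g x \<le> ereal r}" for r
    using closed_fun_sublevel_graph[OF closed, of "\<lambda>_. r"] by simp
  then have "\<exists>z\<in>cball x1 1. \<forall>x\<in>cball x1 1. g z \<le> g x"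
    by (intro closed_sublevels_attains_inf) auto
  then obtain z where z_min: "\<And>x. x \<in> cball x1 1 \<Longrightarrow> g z \<le> g x"
    by blast
  have "g z \<le> ereal a"
    using z_min[of x1] \<open>g x1 = ereal a\<close> by simp
  then obtain m where gz: "g z = ereal m" and "m \<le> a"
    using finite_below[of z] by (cases "g z") auto
  have "ereal (m - (a - m) * norm (x - x1)) \<le> g x" for x
  proof (cases "norm (x - x1) \<le> 1")
    case True
    then have "ereal m \<le> g x"
      using z_min[of x] gz by (simp add: dist_norm norm_minus_commute)
    moreover have "m - (a - m) * norm (x - x1) \<le> m"
      using \<open>m \<le> a\<close> by simp
    ultimately show ?thesis
      by (meson ereal_less_eq(3) order_trans)
  next
    case False
    show ?thesis
    proof (cases "g x")
      case (real b)
      define D where "D = norm (x - x1)"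
      define l where "l = 1 / D"
      have "1 < D"
        using False by (simp add: D_def)
      then have "0 \<le> l" "l \<le> 1"
        by (simp_all add: l_def)
      define y where "y = l *\<^sub>R x + (1 - l) *\<^sub>R x1"
      have "norm (y - x1) = l * D"
        using \<open>0 \<le> l\<close> by (simp add: y_def D_def algebra_simps flip: scaleR_diff_right)
      then have "ereal m \<le> g y"
        using z_min gz \<open>1 < D\<close> by (simp add: l_def dist_norm norm_minus_commute)
      also have "\<dots> \<le> ereal (l * b + (1 - l) * a)"
      proof -
        have "g y + ereal (0 / 2 * l * (1 - l) * norm (x - x1)^2) \<le> ereal l * g x + ereal (1 - l) * g x1"
          using convex \<open>0 \<le> l\<close> \<open>l \<le> 1\<close> unfolding strongly_convex_ext_def y_def by blast
        then show ?thesis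
          by (simp add: real \<open>g x1 = ereal a\<close>)
      qed
      finally have "m \<le> l * b + (1 - l) * a"
        by simp
      then have "D * m \<le> b + (D - 1) * a"
        using \<open>1 < D\<close> by (simp add: l_def field_simps)
      then show ?thesis
        using real \<open>m \<le> a\<close> by (simp add: D_def algebra_simps)
    qed (use finite_below in auto)
  qed
  then show ?thesis
    using \<open>m \<le> a\<close> by (intro exI[of _ m] exI[of _ "a - m"]) auto
qed

lemma half_square_dominates_linear:
  fixes a b p :: real
  assumes "0 \<le> a" and "2 * (a + 1) + \<bar>b\<bar> < p"
  shows "b < p^2 / 2 - a * p"
proof -
  have "p * 1 \<le> p * (p / 2 - a)"
    using assms by (intro mult_left_mono) auto
  then show ?thesis
    using assms by (simp add: power2_eq_square algebra_simps)
qed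

lemma prox_objective_coercive:
  fixes g :: "'a::euclidean_space \<Rightarrow> ereal"
  assumes closed: "closed_fun g" and finite_below: "\<And>x. g x \<noteq> -\<infinity>" and ga: "g x1 = ereal a"
    and convex: "strongly_convex_ext 0 g" and "0 < c"
  shows "\<exists>R\<ge>0. \<forall>x. R < norm (x - x1) \<longrightarrow>
    ereal c * g x1 + ereal (norm (x1 - u)^2 / 2) < ereal c * g x + ereal (norm (x - u)^2 / 2)"
proof -
  obtain L K where "0 \<le> K" and minorant: "\<And>x. ereal (L - K * norm (x - x1)) \<le> g x"
    using convex_closed_fun_cone_minorant[OF closed finite_below ga convex] by blast
  define e where "e = norm (x1 - u)"
  define F1 where "F1 = c * a + e^2 / 2"
  define R where "R = e + 2 * (c * K + 1) + \<bar>F1 - c * L + c * K * e\<bar>"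
  have "0 \<le> R"
    using \<open>0 < c\<close> \<open>0 \<le> K\<close> by (simp add: R_def e_def)
  moreover have "ereal F1 < ereal c * g x + ereal (norm (x - u)^2 / 2)" if "R < norm (x - x1)" for x
  proof (cases "g x")
    case (real b)
    define p where "p = norm (x - u)"
    have "norm (x - x1) \<le> p + e"
      using norm_triangle_ineq[of "x - u" "u - x1"] by (simp add: p_def e_def norm_minus_commute)
    then have "K * norm (x - x1) \<le> K * (p + e)"
      using \<open>0 \<le> K\<close> by (rule mult_left_mono)
    moreover have "L - K * norm (x - x1) \<le> b"
      using minorant[of x] real by simp
    ultimately have "c * (L - K * (p + e)) \<le> c * b"
      using \<open>0 < c\<close> by (intro mult_left_mono) auto
    moreover have "F1 - c * L + c * K * e < p^2 / 2 - c * K * p"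
      using that \<open>0 \<le> K\<close> \<open>0 < c\<close> \<open>norm (x - x1) \<le> p + e\<close>
      by (intro half_square_dominates_linear) (auto simp: R_def)
    ultimately show ?thesis
      by (simp add: real p_def algebra_simps)
  qed (use \<open>0 < c\<close> finite_below in auto)
  ultimately show ?thesis
    by (auto simp: F1_def e_def ga)
qed

lemma prox_objective_attains_min:
  fixes g :: "'a::euclidean_space \<Rightarrow> ereal"
  assumes closed: "closed_fun g" and finite_below: "\<And>x. g x \<noteq> -\<infinity>" and "g x1 \<noteq> \<infinity>"
    and convex: "strongly_convex_ext 0 g" and "0 < c"
  shows "\<exists>z. \<forall>x. ereal c * g z + ereal (norm (z - u)^2 / 2) \<le> ereal c * g x + ereal (norm (x - u)^2 / 2)"
proof -
  define F where "F x = ereal c * g x + ereal (norm (x - u)^2 / 2)" for x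
  obtain a where "g x1 = ereal a"
    using \<open>g x1 \<noteq> \<infinity>\<close> finite_below[of x1] by (cases "g x1") auto
  then obtain R where "0 \<le> R" and far: "\<And>x. R < norm (x - x1) \<Longrightarrow> F x1 < F x"
    using prox_objective_coercive[OF closed finite_below _ convex \<open>0 < c\<close>] unfolding F_def by blast
  have "closed {x. F x \<le> ereal r}" for r
    unfolding F_def using closed \<open>0 < c\<close> by (rule closed_fun_prox_objective_sublevel)
  then have "\<exists>z\<in>cball x1 R. \<forall>x\<in>cball x1 R. F z \<le> F x"
    using \<open>0 \<le> R\<close> by (intro closed_sublevels_attains_inf) auto
  then obtain z where z_min: "\<And>x. x \<in> cball x1 R \<Longrightarrow> F z \<le> F x"
    by blast
  have "F z \<le> F x" for x
  proof (cases "x \<in> cball x1 R")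
    case False
    then have "F x1 < F x"
      by (intro far) (simp add: dist_norm norm_minus_commute)
    then show ?thesis
      using z_min[of x1] \<open>0 \<le> R\<close> by simp
  qed (rule z_min)
  then show ?thesis
    unfolding F_def by blast
qed

lemma prox_minimizes:
  fixes g :: "'a::euclidean_space \<Rightarrow> ereal" and u :: 'a
  assumes "closed_fun g" and "\<And>x. g x \<noteq> -\<infinity>" and "g x1 \<noteq> \<infinity>"
    and "strongly_convex_ext 0 g" and "0 < c"
  defines "z \<equiv> prox (\<lambda>v. ereal c * g v) u"
  shows "ereal c * g z + ereal (norm (z - u)^2 / 2) \<le> ereal c * g x + ereal (norm (x - u)^2 / 2)"
  using someI_ex[OF prox_objective_attains_min[OF assms(1-5)]]
  unfolding z_def prox_def by blast

lemma half_norm_sq_convex_combination: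
  fixes x z w :: "'a::real_inner"
  shows "norm (l *\<^sub>R x + (1 - l) *\<^sub>R z - w)^2 / 2
    = l * (norm (x - w)^2 / 2) + (1 - l) * (norm (z - w)^2 / 2) - l * (1 - l) / 2 * norm (x - z)^2"
proof -
  have "l *\<^sub>R x + (1 - l) *\<^sub>R z - w = l *\<^sub>R (x - w) + (1 - l) *\<^sub>R (z - w)"
    and "x - z = (x - w) - (z - w)"
    by (simp_all add: algebra_simps)
  then show ?thesis
    unfolding power2_norm_eq_inner
    by (simp add: inner_add_left inner_add_right inner_diff_left inner_diff_right
        inner_commute field_simps)
qed

lemma segment_min_gap:
  fixes a b k :: real
  assumes "\<And>l. 0 < l \<Longrightarrow> l < 1 \<Longrightarrow> b \<le> l * a + (1 - l) * b - k * l * (1 - l)"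
  shows "b + k \<le> a"
proof -
  have "s * k \<le> a - b" if "0 < s" "s < 1" for s
  proof -
    have "(1 - s) * (s * k) \<le> (1 - s) * (a - b)"
      using assms[of "1 - s"] that by (simp add: algebra_simps)
    then show ?thesis
      using that by simp
  qed
  then show ?thesis
    using field_le_mult_one_interval[of k "a - b"] by simp
qed

lemma scaled_strongly_convex_ext_finite:
  fixes g :: "'a::real_normed_vector \<Rightarrow> ereal"
  assumes sc: "strongly_convex_ext \<mu> g" and "0 \<le> c" and finite_below: "\<And>x. g x \<noteq> -\<infinity>"
    and Gx: "ereal c * g x = ereal Gx" and Gy: "ereal c * g y = ereal Gy"
    and "0 \<le> l" and "l \<le> 1"
  shows "ereal c * g (l *\<^sub>R x + (1 - l) *\<^sub>R y)
    \<le> ereal (l * Gx + (1 - l) * Gy - c * \<mu> / 2 * l * (1 - l) * norm (x - y)^2)"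
proof (cases "c = 0")
  case True
  then show ?thesis
    using Gx Gy by (simp add: zero_ereal_def[symmetric])
next
  case False
  then have "0 < c"
    using \<open>0 \<le> c\<close> by simp
  obtain gx gy where gx: "g x = ereal gx" and gy: "g y = ereal gy"
    using Gx Gy \<open>0 < c\<close> finite_below by (cases "g x"; cases "g y") auto
  have "g (l *\<^sub>R x + (1 - l) *\<^sub>R y) + ereal (\<mu> / 2 * l * (1 - l) * norm (x - y)^2)
      \<le> ereal l * g x + ereal (1 - l) * g y"
    using sc \<open>0 \<le> l\<close> \<open>l \<le> 1\<close> unfolding strongly_convex_ext_def by blast
  then have "g (l *\<^sub>R x + (1 - l) *\<^sub>R y) \<le> ereal (l * gx + (1 - l) * gy - \<mu> / 2 * l * (1 - l) * norm (x - y)^2)"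
    using gx gy finite_below by (cases "g (l *\<^sub>R x + (1 - l) *\<^sub>R y)") auto
  then have "ereal c * g (l *\<^sub>R x + (1 - l) *\<^sub>R y)
      \<le> ereal c * ereal (l * gx + (1 - l) * gy - \<mu> / 2 * l * (1 - l) * norm (x - y)^2)"
    using \<open>0 < c\<close> by (intro ereal_mult_left_mono) auto
  moreover have "Gx = c * gx" "Gy = c * gy"
    using Gx Gy gx gy by auto
  ultimately show ?thesis
    by (simp add: algebra_simps)
qed

lemma prox_objective_quadratic_growth:
  fixes g :: "'a::real_inner \<Rightarrow> ereal"
  assumes sc: "strongly_convex_ext \<mu> g" and "0 \<le> c" and finite_below: "\<And>x. g x \<noteq> -\<infinity>"
    and "ereal c * g z \<noteq> \<infinity>"
    and z_min: "\<And>x. ereal c * g z + ereal (norm (z - w)^2 / 2) \<le> ereal c * g x + ereal (norm (x - w)^2 / 2)"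
  shows "ereal c * g z + ereal (norm (z - w)^2 / 2) + ereal ((1 + c * \<mu>) / 2 * norm (x - z)^2)
    \<le> ereal c * g x + ereal (norm (x - w)^2 / 2)"
proof (cases "ereal c * g x = \<infinity>")
  case True
  show ?thesis
    unfolding True by simp
next
  case False
  have not_minf: "ereal c * g v \<noteq> -\<infinity>" for v
    using finite_below[of v] \<open>0 \<le> c\<close> by (cases "g v"; cases "c = 0") auto
  obtain Gx Gz where Gx: "ereal c * g x = ereal Gx" and Gz: "ereal c * g z = ereal Gz"
    using False \<open>ereal c * g z \<noteq> \<infinity>\<close> not_minf[of x] not_minf[of z]
    by (cases "ereal c * g x"; cases "ereal c * g z") auto
  define Fx Fz where "Fx = Gx + norm (x - w)^2 / 2" and "Fz = Gz + norm (z - w)^2 / 2"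
  have "Fz \<le> l * Fx + (1 - l) * Fz - (1 + c * \<mu>) / 2 * norm (x - z)^2 * l * (1 - l)"
    if "0 < l" "l < 1" for l
  proof -
    define y where "y = l *\<^sub>R x + (1 - l) *\<^sub>R z"
    have "ereal Fz \<le> ereal c * g y + ereal (norm (y - w)^2 / 2)"
      using z_min[of y] Gz by (simp add: Fz_def)
    also have "\<dots> \<le> ereal (l * Gx + (1 - l) * Gz - c * \<mu> / 2 * l * (1 - l) * norm (x - z)^2)
        + ereal (norm (y - w)^2 / 2)"
      unfolding y_def using that
      by (intro add_right_mono scaled_strongly_convex_ext_finite[OF sc \<open>0 \<le> c\<close> finite_below Gx Gz]) auto
    also have "\<dots> = ereal (l * Fx + (1 - l) * Fz - (1 + c * \<mu>) / 2 * norm (x - z)^2 * l * (1 - l))"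
      unfolding y_def half_norm_sq_convex_combination Fx_def Fz_def by (simp add: field_simps)
    finally show ?thesis
      by simp
  qed
  then have "Fz + (1 + c * \<mu>) / 2 * norm (x - z)^2 \<le> Fx"
    by (rule segment_min_gap)
  then show ?thesis
    by (simp add: Gx Gz Fx_def Fz_def)
qed

lemma linearized_prox_three_point:
  fixes x xb X v :: "'a::real_inner"
  assumes "u = X - \<eta> *\<^sub>R v"
    and "\<eta> * gb + norm (xb - u)^2 / 2 + norm (x - xb)^2 / 2 \<le> \<eta> * gx + norm (x - u)^2 / 2"
  shows "\<eta> * (gb + v \<bullet> xb) + norm (x - xb)^2 / 2 \<le> \<eta> * (gx + v \<bullet> x) + norm (x - X)^2 / 2"
proof -
  have expand: "norm (y - u)^2 / 2 = norm (y - X)^2 / 2 + \<eta> * (v \<bullet> y) - \<eta> * (v \<bullet> X) + \<eta>^2 * norm v^2 / 2"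
    for y
    unfolding assms(1) power2_norm_eq_inner
    by (simp add: inner_add_left inner_add_right inner_diff_left inner_diff_right
        inner_commute power2_eq_square field_simps)
  show ?thesis
    unfolding distrib_left
    using assms(2) expand[of x] expand[of xb] zero_le_power2[of "norm (xb - X)"] by linarith
qed

lemma inner_single_coordinate_matrix_bound:
  fixes d :: "real^'n" and A :: "real^'d^'n"
  assumes single: "\<And>i. i \<noteq> j \<Longrightarrow> d $ i = 0" and rows: "\<And>i. norm (A $ i) \<le> R"
  shows "\<bar>d \<bullet> (A *v v)\<bar> \<le> R * norm d * norm v"
proof -
  have "d \<bullet> w = d $ j * w $ j" for w :: "real^'n"
    unfolding inner_vec_def using single by (simp add: sum.remove[of UNIV j])
  then have "d \<bullet> (A *v v) = d $ j * (A $ j \<bullet> v)" and "norm d = \<bar>d $ j\<bar>"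
    by (simp_all add: matrix_vector_mul_component norm_eq_sqrt_inner)
  moreover have "\<bar>A $ j \<bullet> v\<bar> \<le> R * norm v"
    using Cauchy_Schwarz_ineq2[of "A $ j" v] rows[of j]
    by (meson mult_right_mono norm_ge_zero order_trans)
  moreover have "\<bar>d $ j\<bar> * \<bar>A $ j \<bullet> v\<bar> \<le> \<bar>d $ j\<bar> * (R * norm v)"
    using calculation(3) by (rule mult_left_mono) simp
  ultimately show ?thesis
    by (simp add: abs_mult mult_ac)
qed

lemma mult_le_weighted_squares:
  fixes p q \<eta> :: real
  assumes "0 < \<eta>"
  shows "p * q \<le> p^2 / (2 * \<eta>) + \<eta> * q^2 / 2"
proof -
  have "0 \<le> (p - \<eta> * q)^2 / (2 * \<eta>)"
    using assms by simp
  also have "\<dots> = p^2 / (2 * \<eta>) + \<eta> * q^2 / 2 - p * q"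
    using assms by (simp add: power2_eq_square field_simps)
  finally show ?thesis
    by simp
qed

lemma coordinate_step_bound:
  fixes A :: "real^'d^'n" and x xb X :: "real^'d" and Y Y' :: "real^'n"
  assumes "0 < \<eta>" and "0 < \<beta>" and "\<beta> \<le> \<eta> * \<sigma>" and "0 < n"
    and three_point: "\<eta> * (gb + Y \<bullet> (A *v xb) / n) + norm (x - xb)^2 / 2
      \<le> \<eta> * (gx + Y \<bullet> (A *v x) / n) + norm (x - X)^2 / 2"
    and single: "\<And>i. i \<noteq> j \<Longrightarrow> Y' $ i = Y $ i" and rows: "\<And>i. norm (A $ i) \<le> R"
  defines "ybar \<equiv> Y + n *\<^sub>R (Y' - Y)"
  shows "\<beta> * (gb + ybar \<bullet> (A *v xb) / n) - R^2 * \<beta> * \<eta> / 2 * norm (Y' - Y)^2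
    \<le> \<sigma> / 2 * norm (x - X)^2 + \<beta> * (gx + ybar \<bullet> (A *v x) / n)"
proof -
  define d where "d = Y' - Y"
  define v where "v = x - xb"
  have ybar_split: "ybar \<bullet> (A *v z) / n = Y \<bullet> (A *v z) / n + d \<bullet> (A *v z)" for z
  proof -
    have "ybar \<bullet> (A *v z) = Y \<bullet> (A *v z) + n * (d \<bullet> (A *v z))"
      unfolding ybar_def d_def by (simp only: inner_add_left inner_scaleR_left)
    then show ?thesis
      using \<open>0 < n\<close> by (simp add: field_simps)
  qed
  have "d \<bullet> (A *v xb) - d \<bullet> (A *v x) = - (d \<bullet> (A *v v))"
    by (simp add: v_def matrix_vector_mult_diff_distrib inner_diff_right)
  also have "\<dots> \<le> R * norm d * norm v"
    using inner_single_coordinate_matrix_bound[where d = d and j = j and v = v, OF _ rows] single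
    by (simp add: d_def)
  also have "\<dots> \<le> norm v^2 / (2 * \<eta>) + \<eta> * (R * norm d)^2 / 2"
    using mult_le_weighted_squares[OF \<open>0 < \<eta>\<close>, of "norm v" "R * norm d"] by (simp add: mult_ac)
  finally have "\<beta> * (d \<bullet> (A *v xb) - d \<bullet> (A *v x)) \<le> \<beta> * (norm v^2 / (2 * \<eta>) + \<eta> * (R * norm d)^2 / 2)"
    using \<open>0 < \<beta>\<close> by (intro mult_left_mono) auto
  then have cross: "\<beta> * (d \<bullet> (A *v xb)) - \<beta> * (norm v^2 / (2 * \<eta>)) - R^2 * \<beta> * \<eta> / 2 * norm d^2
      \<le> \<beta> * (d \<bullet> (A *v x))"
    by (simp add: algebra_simps power_mult_distrib)
  have "\<beta> / \<eta> * (\<eta> * (gb + Y \<bullet> (A *v xb) / n) + norm v^2 / 2)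
      \<le> \<beta> / \<eta> * (\<eta> * (gx + Y \<bullet> (A *v x) / n) + norm (x - X)^2 / 2)"
    using three_point \<open>0 < \<eta>\<close> \<open>0 < \<beta>\<close> by (intro mult_left_mono) (auto simp: v_def)
  then have scaled: "\<beta> * gb + \<beta> * (Y \<bullet> (A *v xb) / n) + \<beta> * (norm v^2 / (2 * \<eta>))
      \<le> \<beta> * gx + \<beta> * (Y \<bullet> (A *v x) / n) + \<beta> / (2 * \<eta>) * norm (x - X)^2"
    using \<open>0 < \<eta>\<close> by (simp add: field_simps)
  have "\<beta> / (2 * \<eta>) * norm (x - X)^2 \<le> \<sigma> / 2 * norm (x - X)^2"
    using \<open>0 < \<eta>\<close> \<open>\<beta> \<le> \<eta> * \<sigma>\<close> by (intro mult_right_mono) (auto simp: field_simps)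
  then show ?thesis
    unfolding ybar_split distrib_left d_def[symmetric] using cross scaled by linarith
qed

lemma sdapd_prefix_cong:
  assumes "\<And>k. k < t \<Longrightarrow> p k = q k"
  shows "sdapd A g f \<eta> \<tau> \<beta> x0 y0 p t = sdapd A g f \<eta> \<tau> \<beta> x0 y0 q t"
  using assms by (induction t) auto

lemma ereal_mean_affine_lower_bound:
  fixes a b :: "'j \<Rightarrow> ereal" and c :: "'j \<Rightarrow> real"
  assumes "finite J" and "0 < N"
    and bound: "\<And>j. j \<in> J \<Longrightarrow> ereal \<beta> * b j - ereal K * ereal (c j) \<le> a j"
    and a_finite: "\<And>j. j \<in> J \<Longrightarrow> \<bar>a j\<bar> \<noteq> \<infinity>" and b_finite: "\<And>j. j \<in> J \<Longrightarrow> \<bar>b j\<bar> \<noteq> \<infinity>"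
  shows "ereal \<beta> * ((\<Sum>j\<in>J. b j) / ereal N) - ereal K * ((\<Sum>j\<in>J. ereal (c j)) / ereal N)
    \<le> (\<Sum>j\<in>J. a j) / ereal N"
proof -
  define a' b' where "a' j = real_of_ereal (a j)" and "b' j = real_of_ereal (b j)" for j
  have a: "(\<Sum>j\<in>J. a j) = ereal (\<Sum>j\<in>J. a' j)" and b: "(\<Sum>j\<in>J. b j) = ereal (\<Sum>j\<in>J. b' j)"
    unfolding sum_ereal[symmetric] a'_def b'_def using a_finite b_finite
    by (auto intro!: sum.cong simp: ereal_real')
  have "\<beta> * b' j - K * c j \<le> a' j" if "j \<in> J" for j
    using bound[OF that] a_finite[OF that] b_finite[OF that]
    by (cases "a j"; cases "b j") (simp_all add: a'_def b'_def)
  then have "(\<Sum>j\<in>J. \<beta> * b' j - K * c j) / N \<le> (\<Sum>j\<in>J. a' j) / N"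
    using \<open>0 < N\<close> by (intro divide_right_mono sum_mono) auto
  then show ?thesis
    using \<open>0 < N\<close>
    by (simp add: a b sum_subtractf sum_distrib_left diff_divide_distrib)
qed

locale sdapd_problem =
  fixes A :: "real^'d::finite^'n::finite" and g :: "real^'d \<Rightarrow> ereal" and f :: "'n \<Rightarrow> real \<Rightarrow> real"
    and \<mu> \<eta> \<tau> :: real and \<beta> :: "nat \<Rightarrow> real" and x0 :: "real^'d" and y0 :: "real^'n"
  assumes mu_nonneg: "0 \<le> \<mu>" and eta_pos: "0 < \<eta>" and beta_pos: "\<And>k. 0 < \<beta> k"
    and g_finite_below: "\<And>x. g x \<noteq> -\<infinity>" and g_proper: "\<exists>x. g x \<noteq> \<infinity>"
    and g_closed: "closed_fun g" and g_strongly_convex: "strongly_convex_ext \<mu> g"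
begin

abbreviation "X p t \<equiv> sd_x A g f \<eta> \<tau> \<beta> x0 y0 p t"
abbreviation "Y p t \<equiv> sd_y A g f \<eta> \<tau> \<beta> x0 y0 p t"
abbreviation "Xbar p t \<equiv> sd_xbar A g f \<eta> \<tau> \<beta> x0 y0 p t"
abbreviation "Ybar p t \<equiv> sd_ybar A g f \<eta> \<tau> \<beta> x0 y0 p t"
abbreviation "Phi p t \<equiv> sd_phi A g f \<eta> \<tau> \<beta> x0 y0 p t"
abbreviation "Phistar p t \<equiv> sd_phistar A g f \<eta> \<tau> \<beta> x0 y0 p t"
abbreviation "dual_sum p t \<equiv> snd (snd (sdapd A g f \<eta> \<tau> \<beta> x0 y0 p t))"

definition shift :: "(nat \<Rightarrow> 'n) \<Rightarrow> nat \<Rightarrow> real^'d" where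
  "shift p t = (1 / real CARD('n)) *\<^sub>R (transpose A *v dual_sum p t)"

lemma g_convex: "strongly_convex_ext 0 g"
  using g_strongly_convex mu_nonneg by (rule strongly_convex_ext_imp_convex)

lemma Bsum_nonneg: "0 \<le> Bsum \<beta> t"
  unfolding Bsum_def using beta_pos by (simp add: sum_nonneg less_imp_le)

lemma Bsum_Suc_pos: "0 < Bsum \<beta> (Suc t)"
  unfolding Bsum_def by (rule sum_pos) (auto intro: beta_pos)

lemma Y_Suc_other: "i \<noteq> p t \<Longrightarrow> Y p (Suc t) $ i = Y p t $ i"
  by (cases "sdapd A g f \<eta> \<tau> \<beta> x0 y0 p t") (simp add: sd_y_def Let_def)

lemma dual_sum_Suc: "dual_sum p (Suc t) = dual_sum p t + \<beta> t *\<^sub>R Ybar p t"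
  by (cases "sdapd A g f \<eta> \<tau> \<beta> x0 y0 p t") (simp add: sd_y_def sd_ybar_def Let_def)

lemma dual_sum_eq: "dual_sum p t = (\<Sum>k<t. \<beta> k *\<^sub>R Ybar p k)"
proof (induction t)
  case (Suc t)
  then show ?case
    by (subst dual_sum_Suc) simp
qed simp

lemma X_Suc: "X p (Suc t) = prox (\<lambda>v. ereal (Bsum \<beta> (Suc t)) * g v) (x0 - shift p (Suc t))"
  unfolding shift_def
  by (cases "sdapd A g f \<eta> \<tau> \<beta> x0 y0 p t") (simp add: sd_x_def Let_def)

lemma Phi_Suc:
  "Phi p (Suc t) x = Phi p t x + ereal (\<beta> t) * (g x + ereal (Ybar p t \<bullet> (A *v x) / real CARD('n)))"
  unfolding sd_phi_def by (simp add: add.assoc)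

lemma Phi_eq_prox_objective:
  "Phi p t x = ereal (Bsum \<beta> t) * g x + ereal (norm (x - (x0 - shift p t))^2 / 2)
    + ereal (x0 \<bullet> shift p t - norm (shift p t)^2 / 2)"
proof (cases t)
  case 0
  then show ?thesis
    by (simp add: sd_phi_def shift_def Bsum_def zero_ereal_def[symmetric])
next
  case (Suc t')
  show ?thesis
  proof (cases "g x")
    case (real r)
    define s where "s = shift p t"
    have "shift p t \<bullet> x = (\<Sum>k<t. \<beta> k * (Ybar p k \<bullet> (A *v x))) / real CARD('n)"
      by (simp add: shift_def dual_sum_eq dot_lmul_matrix inner_sum_left)
    then have "(\<Sum>k<t. \<beta> k * (r + Ybar p k \<bullet> (A *v x) / real CARD('n))) = Bsum \<beta> t * r + s \<bullet> x"
      by (simp add: s_def Bsum_def algebra_simps sum.distrib sum_distrib_left sum_distrib_right sum_divide_distrib)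
    moreover have "norm (x - (x0 - s))^2 = norm (x - x0)^2 + 2 * (s \<bullet> x) - 2 * (x0 \<bullet> s) + norm s^2"
      unfolding power2_norm_eq_inner by (simp add: inner_add_left inner_add_right inner_diff_left
          inner_diff_right inner_commute)
    ultimately show ?thesis
      by (simp add: sd_phi_def real s_def field_simps)
  next
    case PInf
    have "(\<Sum>k<t. ereal (\<beta> k) * (g x + ereal (Ybar p k \<bullet> (A *v x) / real CARD('n)))) = \<infinity>"
      using PInf beta_pos[of t'] Suc by (auto simp: sum_Pinfty)
    moreover have "ereal (Bsum \<beta> t) * g x = \<infinity>"
      using PInf Bsum_Suc_pos[of t'] Suc by simp
    ultimately show ?thesis
      by (simp add: sd_phi_def)
  qed (use g_finite_below in auto)
qed

lemma X_minimizes: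
  "ereal (Bsum \<beta> t) * g (X p t) + ereal (norm (X p t - (x0 - shift p t))^2 / 2)
    \<le> ereal (Bsum \<beta> t) * g z + ereal (norm (z - (x0 - shift p t))^2 / 2)"
proof (cases t)
  case 0
  then show ?thesis
    by (simp add: sd_x_def shift_def Bsum_def zero_ereal_def[symmetric])
next
  case (Suc t')
  obtain x1 where "g x1 \<noteq> \<infinity>"
    using g_proper by blast
  show ?thesis
    unfolding Suc X_Suc
    using g_closed g_finite_below \<open>g x1 \<noteq> \<infinity>\<close> g_convex Bsum_Suc_pos by (rule prox_minimizes)
qed

lemma Bsum_g_X_finite: "ereal (Bsum \<beta> t) * g (X p t) \<noteq> \<infinity>"
proof
  assume "ereal (Bsum \<beta> t) * g (X p t) = \<infinity>"
  moreover obtain x1 where "g x1 \<noteq> \<infinity>"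
    using g_proper by blast
  ultimately show False
    using X_minimizes[of t p x1] g_finite_below[of x1] by (cases "g x1") auto
qed

lemma Phi_quadratic_growth:
  "Phi p t (X p t) + ereal ((1 + Bsum \<beta> t * \<mu>) / 2 * norm (x - X p t)^2) \<le> Phi p t x"
proof -
  have "ereal (Bsum \<beta> t) * g (X p t) + ereal (norm (X p t - (x0 - shift p t))^2 / 2)
      + ereal ((1 + Bsum \<beta> t * \<mu>) / 2 * norm (x - X p t)^2)
      \<le> ereal (Bsum \<beta> t) * g x + ereal (norm (x - (x0 - shift p t))^2 / 2)"
    using g_strongly_convex Bsum_nonneg g_finite_below Bsum_g_X_finite X_minimizes
    by (rule prox_objective_quadratic_growth)
  then have "ereal (Bsum \<beta> t) * g (X p t) + ereal (norm (X p t - (x0 - shift p t))^2 / 2)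
      + ereal ((1 + Bsum \<beta> t * \<mu>) / 2 * norm (x - X p t)^2)
      + ereal (x0 \<bullet> shift p t - norm (shift p t)^2 / 2)
      \<le> ereal (Bsum \<beta> t) * g x + ereal (norm (x - (x0 - shift p t))^2 / 2)
      + ereal (x0 \<bullet> shift p t - norm (shift p t)^2 / 2)"
    by (rule add_right_mono)
  then show ?thesis
    unfolding Phi_eq_prox_objective by (simp only: ac_simps)
qed

lemma Phistar_eq: "Phistar p t = Phi p t (X p t)"
  unfolding sd_phistar_def
proof (rule antisym)
  show "(INF x. Phi p t x) \<le> Phi p t (X p t)"
    by (rule INF_lower) simp
  have "Phi p t (X p t) \<le> Phi p t x" for x
    using Bsum_nonneg mu_nonneg
    by (intro order.trans[OF ereal_le_add_self Phi_quadratic_growth]) simp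
  then show "Phi p t (X p t) \<le> (INF x. Phi p t x)"
    by (rule INF_greatest)
qed

lemma Phistar_finite: "\<bar>Phistar p t\<bar> \<noteq> \<infinity>"
proof -
  have "ereal (Bsum \<beta> t) * g (X p t) \<noteq> -\<infinity>"
    using Bsum_nonneg[of t] g_finite_below[of "X p t"] by (cases "g (X p t)") (auto simp: ereal_mult_infty)
  then obtain r where "ereal (Bsum \<beta> t) * g (X p t) = ereal r"
    using Bsum_g_X_finite[of t p] by (cases "ereal (Bsum \<beta> t) * g (X p t)") auto
  then show ?thesis
    unfolding Phistar_eq Phi_eq_prox_objective by simp
qed

lemma Xbar_minimizes:
  fixes p :: "nat \<Rightarrow> 'n" and t :: nat
  defines "u \<equiv> X p t - (\<eta> / real CARD('n)) *\<^sub>R (transpose A *v Y p t)"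
  shows "ereal \<eta> * g (Xbar p t) + ereal (norm (Xbar p t - u)^2 / 2)
    \<le> ereal \<eta> * g z + ereal (norm (z - u)^2 / 2)"
proof -
  obtain x1 where "g x1 \<noteq> \<infinity>"
    using g_proper by blast
  show ?thesis
    unfolding sd_xbar_def u_def
    using g_closed g_finite_below \<open>g x1 \<noteq> \<infinity>\<close> g_convex eta_pos by (rule prox_minimizes)
qed

lemma g_Xbar_finite: "g (Xbar p t) \<noteq> \<infinity>"
proof
  assume "g (Xbar p t) = \<infinity>"
  moreover obtain x1 where "g x1 \<noteq> \<infinity>"
    using g_proper by blast
  ultimately show False
    using Xbar_minimizes[of p t x1] g_finite_below[of x1] eta_pos by (cases "g x1") auto
qed

lemma Xbar_three_point:
  assumes "g x = ereal gx" and "g (Xbar p t) = ereal gb"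
  shows "\<eta> * (gb + Y p t \<bullet> (A *v Xbar p t) / real CARD('n)) + norm (x - Xbar p t)^2 / 2
    \<le> \<eta> * (gx + Y p t \<bullet> (A *v x) / real CARD('n)) + norm (x - X p t)^2 / 2"
proof -
  define v where "v = (1 / real CARD('n)) *\<^sub>R (transpose A *v Y p t)"
  define u where "u = X p t - \<eta> *\<^sub>R v"
  have v_inner: "v \<bullet> z = Y p t \<bullet> (A *v z) / real CARD('n)" for z
  proof -
    have "(Y p t v* A) \<bullet> z = Y p t \<bullet> (A *v z)"
      by (rule dot_lmul_matrix)
    then show ?thesis
      by (simp add: v_def)
  qed
  have "ereal \<eta> * g (Xbar p t) + ereal (norm (Xbar p t - u)^2 / 2)
      + ereal ((1 + \<eta> * \<mu>) / 2 * norm (x - Xbar p t)^2)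
      \<le> ereal \<eta> * g x + ereal (norm (x - u)^2 / 2)"
  proof (rule prox_objective_quadratic_growth[OF g_strongly_convex _ g_finite_below])
    show "ereal \<eta> * g (Xbar p t) + ereal (norm (Xbar p t - u)^2 / 2)
        \<le> ereal \<eta> * g z + ereal (norm (z - u)^2 / 2)" for z
      using Xbar_minimizes[of p t z] by (simp add: u_def v_def)
  qed (use eta_pos assms(2) in auto)
  moreover have "norm (x - Xbar p t)^2 / 2 \<le> (1 + \<eta> * \<mu>) / 2 * norm (x - Xbar p t)^2"
    using mult_nonneg_nonneg[OF mult_nonneg_nonneg[OF less_imp_le[OF eta_pos] mu_nonneg],
        of "norm (x - Xbar p t)^2"]
    by (simp add: field_simps)
  ultimately have "\<eta> * gb + norm (Xbar p t - u)^2 / 2 + norm (x - Xbar p t)^2 / 2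
      \<le> \<eta> * gx + norm (x - u)^2 / 2"
    using assms by simp
  then show ?thesis
    using linearized_prox_three_point[OF u_def] by (simp add: v_inner)
qed

lemma Xbar_prefix_cong: "(\<And>k. k < t \<Longrightarrow> p k = q k) \<Longrightarrow> Xbar p t = Xbar q t"
  unfolding sd_xbar_def sd_x_def sd_y_def by (simp cong: sdapd_prefix_cong)

lemma Phistar_increment:
  assumes step: "\<beta> t \<le> \<eta> * (1 + Bsum \<beta> t * \<mu>)" and rows: "\<And>i. norm (A $ i) \<le> R"
  shows "ereal (\<beta> t) * (g (Xbar p t) + ereal (Ybar p t \<bullet> (A *v Xbar p t) / real CARD('n)))
      - ereal (R^2 * \<beta> t * \<eta> / 2) * ereal (norm (Y p (Suc t) - Y p t)^2)
    \<le> Phistar p (Suc t) - Phistar p t"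
proof -
  obtain gb where gb: "g (Xbar p t) = ereal gb"
    using g_Xbar_finite g_finite_below by (cases "g (Xbar p t)") auto
  obtain m where m: "Phistar p t = ereal m"
    using Phistar_finite[of p t] by (cases "Phistar p t") auto
  define bound where "bound = \<beta> t * (gb + Ybar p t \<bullet> (A *v Xbar p t) / real CARD('n))
    - R^2 * \<beta> t * \<eta> / 2 * norm (Y p (Suc t) - Y p t)^2"
  have "ereal (m + bound) \<le> Phi p (Suc t) x" for x
  proof (cases "g x")
    case (real gx)
    define \<sigma> where "\<sigma> = 1 + Bsum \<beta> t * \<mu>"
    define gain where "gain = \<beta> t * (gx + Ybar p t \<bullet> (A *v x) / real CARD('n))"
    have "bound \<le> \<sigma> / 2 * norm (x - X p t)^2 + gain"
      unfolding bound_def gain_def sd_ybar_def \<sigma>_def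
      by (rule coordinate_step_bound[OF eta_pos beta_pos step _ Xbar_three_point[OF real gb]
            Y_Suc_other rows]) simp_all
    then have "ereal (m + bound) \<le> ereal m + ereal (\<sigma> / 2 * norm (x - X p t)^2) + ereal gain"
      by simp
    also have "\<dots> \<le> Phi p t x + ereal gain"
      using Phi_quadratic_growth[of p t x] unfolding Phistar_eq[symmetric] m \<sigma>_def
      by (rule add_right_mono)
    finally show ?thesis
      by (simp add: Phi_Suc real gain_def)
  next
    case PInf
    have "Phistar p t \<le> Phi p t x"
      unfolding sd_phistar_def by (rule INF_lower) simp
    then have "Phi p t x \<noteq> -\<infinity>"
      using m by auto
    then show ?thesis
      unfolding Phi_Suc PInf using beta_pos[of t] by simp
  qed (use g_finite_below in auto)
  then have "ereal (m + bound) \<le> Phistar p (Suc t)"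
    unfolding sd_phistar_def by (rule INF_greatest)
  then show ?thesis
    using Phistar_finite[of p "Suc t"] by (cases "Phistar p (Suc t)") (simp_all add: m gb bound_def)
qed

end

theorem lemma3p2:
  fixes A :: "(real^('d::finite)^('n::finite))"
    and f :: "'n \<Rightarrow> real \<Rightarrow> real"
    and g :: "(real^'d) \<Rightarrow> ereal"
    and \<gamma> \<mu> \<eta> \<tau> :: real
    and \<beta> :: "nat \<Rightarrow> real"
    and x0 :: "(real^'d)" and y0 :: "(real^'n)"
    and ii :: "nat \<Rightarrow> 'n"
    and t :: nat
  assumes "\<gamma> > 0" and "\<mu> > 0" and "\<eta> > 0" and "\<tau> > 0" and "\<forall>k. \<beta> k > 0"
    and f_convex: "\<forall>i. convex_on UNIV (f i)"
    and f_smooth: "\<forall>i. smooth_fun (1 / \<gamma>) (f i)"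
    and g_range: "\<forall>x. g x \<noteq> -\<infinity>"
    and g_proper: "\<exists>x. g x \<noteq> \<infinity>"
    and g_closed: "closed_fun g"
    and g_sc: "strongly_convex_ext \<mu> g"
    and step: "\<eta> * (1 + Bsum \<beta> t * \<mu>) \<ge> \<beta> t"
  shows
    "(let n = real CARD('n);
          Rbar = Max (range (\<lambda>i. norm (A $ i)));
          P = (\<lambda>j. ii(t := j));
          E = (\<lambda>Z. (\<Sum>j\<in>UNIV. Z (P j)) / ereal n);
          xb = sd_xbar A g f \<eta> \<tau> \<beta> x0 y0 ii t
      in E (\<lambda>p. sd_phistar A g f \<eta> \<tau> \<beta> x0 y0 p (Suc t) - sd_phistar A g f \<eta> \<tau> \<beta> x0 y0 p t)
         \<ge> ereal (\<beta> t) * E (\<lambda>p. g xb + ereal (sd_ybar A g f \<eta> \<tau> \<beta> x0 y0 p t \<bullet> (A *v xb) / n))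
           - ereal (Rbar ^ 2 * \<beta> t * \<eta> / 2)
             * E (\<lambda>p. ereal (norm (sd_y A g f \<eta> \<tau> \<beta> x0 y0 p (Suc t) - sd_y A g f \<eta> \<tau> \<beta> x0 y0 p t) ^ 2)))"
proof -
  interpret sdapd_problem A g f \<mu> \<eta> \<tau> \<beta> x0 y0
    using assms by unfold_locales auto
  define Rbar where "Rbar = Max (range (\<lambda>i. norm (A $ i)))"
  have rows: "norm (A $ i) \<le> Rbar" for i
    unfolding Rbar_def by (rule Max_ge) auto
  have Xbar_eq: "Xbar (ii(t := j)) t = Xbar ii t" for j
    by (rule Xbar_prefix_cong) simp
  show ?thesis
    unfolding Let_def Rbar_def[symmetric]
  proof (rule ereal_mean_affine_lower_bound)
    show "ereal (\<beta> t) * (g (Xbar ii t) + ereal (Ybar (ii(t := j)) t \<bullet> (A *v Xbar ii t) / real CARD('n)))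
        - ereal (Rbar^2 * \<beta> t * \<eta> / 2) * ereal (norm (Y (ii(t := j)) (Suc t) - Y (ii(t := j)) t)^2)
      \<le> Phistar (ii(t := j)) (Suc t) - Phistar (ii(t := j)) t" for j
      using Phistar_increment[OF step rows, of "ii(t := j)"] unfolding Xbar_eq .
    show "\<bar>Phistar (ii(t := j)) (Suc t) - Phistar (ii(t := j)) t\<bar> \<noteq> \<infinity>" for j
      using Phistar_finite[of "ii(t := j)" t] Phistar_finite[of "ii(t := j)" "Suc t"]
      by (cases "Phistar (ii(t := j)) t"; cases "Phistar (ii(t := j)) (Suc t)") auto
    show "\<bar>g (Xbar ii t) + ereal (Ybar (ii(t := j)) t \<bullet> (A *v Xbar ii t) / real CARD('n))\<bar> \<noteq> \<infinity>" for j
      using g_Xbar_finite[of ii t] g_finite_below[of "Xbar ii t"] by (cases "g (Xbar ii t)") auto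
  qed simp_all
qed

end
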